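(* There exists a topological dynamical system $(X,T)$ which is not thickly sensitive and satisfies $\mathrm{Eq}_{\mathrm{syn}}(X,T)=\varnothing$.
   Context: $(X,\varrho)$ compact metric, $T$ continuous surjection. $S_T(U,\delta)=\{n\in\mathbb{N}:\exists x_1,x_2\in U,\ \varrho(T^nx_1,T^nx_2)>\delta\}$, $J_T(U,\delta)=\mathbb N\setminus S_T(U,\delta)$. Thick: contains arbitrarily long blocks of consecutive integers; syndetic: bounded gaps. Thickly sensitive: there is $\delta>0$ with $S_T(U,\delta)$ thick for all opene $U$. $\mathrm{Eq}_{\mathrm{syn}}(X,T)$: points $x$ such that for every $\varepsilon>0$ some neighborhood $U$ of $x$ has $J_T(U,\varepsilon)$ syndetic. *)

theory Defs
  imports "HOL-Analysis.Analysis"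
begin

definition tds :: "'a set \<Rightarrow> ('a \<Rightarrow> 'a \<Rightarrow> real) \<Rightarrow> ('a \<Rightarrow> 'a) \<Rightarrow> bool" where
  "tds M d T \<longleftrightarrow> Metric_space M d \<and> M \<noteq> {} \<and>
     compact_space (Metric_space.mtopology M d) \<and>
     continuous_map (Metric_space.mtopology M d) (Metric_space.mtopology M d) T \<and>
     T ` M = M"

definition thick :: "nat set \<Rightarrow> bool" where
  "thick A \<longleftrightarrow> (\<forall>L. \<exists>n. {n..n+L} \<subseteq> A)"

definition syndetic :: "nat set \<Rightarrow> bool" where
  "syndetic A \<longleftrightarrow> (\<exists>L. \<forall>n. {n..n+L} \<inter> A \<noteq> {})"

definition S_T :: "('a \<Rightarrow> 'a \<Rightarrow> real) \<Rightarrow> ('a \<Rightarrow> 'a) \<Rightarrow> 'a set \<Rightarrow> real \<Rightarrow> nat set" where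
  "S_T d T U \<delta> = {n. \<exists>x1\<in>U. \<exists>x2\<in>U. d ((T ^^ n) x1) ((T ^^ n) x2) > \<delta>}"

definition J_T :: "('a \<Rightarrow> 'a \<Rightarrow> real) \<Rightarrow> ('a \<Rightarrow> 'a) \<Rightarrow> 'a set \<Rightarrow> real \<Rightarrow> nat set" where
  "J_T d T U \<delta> = UNIV - S_T d T U \<delta>"

definition thickly_sensitive :: "'a set \<Rightarrow> ('a \<Rightarrow> 'a \<Rightarrow> real) \<Rightarrow> ('a \<Rightarrow> 'a) \<Rightarrow> bool" where
  "thickly_sensitive M d T \<longleftrightarrow> (\<exists>\<delta>>0. \<forall>U. openin (Metric_space.mtopology M d) U \<and> U \<noteq> {}
      \<longrightarrow> thick (S_T d T U \<delta>))"

definition Eq_syn :: "'a set \<Rightarrow> ('a \<Rightarrow> 'a \<Rightarrow> real) \<Rightarrow> ('a \<Rightarrow> 'a) \<Rightarrow> 'a set" where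
  "Eq_syn M d T = {x\<in>M. \<forall>\<epsilon>>0. \<exists>U. openin (Metric_space.mtopology M d) U \<and> x \<in> U \<and>
      syndetic (J_T d T U \<epsilon>)}"

end

theory Submission
  imports Defs
begin

text \<open>
  The example lives on X = {0} \<union> \<Union>{A_k \<union> B_k | k \<ge> 1} \<subseteq> [0,1], where A_k = [4^-k, 2\<cdot>4^-k] and
  B_k = [3\<cdot>4^-k, 7/2\<cdot>4^-k]. The map fixes 0, acts on every A_k as a rescaled tent map, moves
  B_k onto B_(k-1) by x \<mapsto> 4x and maps B_1 affinely onto A_1.

  Each A_k is an open invariant set of diameter 4^-k, so no \<delta> > 0 witnesses thick sensitivity.
  On the other hand every neighbourhood of a point of X contains a nondegenerate interval inside a
  single block, and iterates of the tent map eventually spread such an interval over all of [0,1];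
  so from some time on the neighbourhood is stretched over a whole A_k (over A_1 for points of the
  B-blocks and for 0). Hence J_T(U,\<epsilon>) is finite for a suitable \<epsilon>, and no point is syndetically
  equicontinuous.
\<close>

lemma mtopology_eq_top_of_set:
  "Metric_space.mtopology M (dist :: 'a::metric_space \<Rightarrow> 'a \<Rightarrow> real) = top_of_set M"
proof -
  interpret Submetric UNIV dist M by unfold_locales auto
  show ?thesis using mtopology_submetric by simp
qed

lemma bounded_not_syndetic:
  assumes "A \<subseteq> {..<N}"
  shows "\<not> syndetic A"
proof
  assume "syndetic A"
  then obtain L where "{N..N+L} \<inter> A \<noteq> {}" unfolding syndetic_def by blast
  with assms show False by auto
qed

lemma Eq_syn_eq_empty_if_eventually_sensitive:
  assumes "\<And>x. x \<in> M \<Longrightarrow> \<exists>\<epsilon>>0. \<forall>U. openin (Metric_space.mtopology M d) U \<and> x \<in> U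
             \<longrightarrow> (\<exists>N. \<forall>n\<ge>N. n \<in> S_T d T U \<epsilon>)"
  shows "Eq_syn M d T = {}"
proof -
  have "x \<notin> Eq_syn M d T" if "x \<in> M" for x
  proof
    assume x: "x \<in> Eq_syn M d T"
    obtain \<epsilon> where "\<epsilon> > 0" and sens: "\<forall>U. openin (Metric_space.mtopology M d) U \<and> x \<in> U
        \<longrightarrow> (\<exists>N. \<forall>n\<ge>N. n \<in> S_T d T U \<epsilon>)"
      using assms \<open>x \<in> M\<close> by blast
    with x obtain U where "openin (Metric_space.mtopology M d) U" "x \<in> U" "syndetic (J_T d T U \<epsilon>)"
      unfolding Eq_syn_def by blast
    moreover from calculation sens obtain N where "\<forall>n\<ge>N. n \<in> S_T d T U \<epsilon>" by blast
    then have "J_T d T U \<epsilon> \<subseteq> {..<N}" unfolding J_T_def using leI by blast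
    ultimately show False using bounded_not_syndetic by blast
  qed
  moreover have "Eq_syn M d T \<subseteq> M" unfolding Eq_syn_def by blast
  ultimately show ?thesis by blast
qed

lemma not_thickly_sensitive_if_small_invariant_opens:
  assumes "\<And>\<delta>. \<delta> > 0 \<Longrightarrow> \<exists>U. openin (Metric_space.mtopology M d) U \<and> U \<noteq> {} \<and>
             (\<forall>n. \<forall>x\<in>U. \<forall>y\<in>U. d ((T ^^ n) x) ((T ^^ n) y) \<le> \<delta>)"
  shows "\<not> thickly_sensitive M d T"
proof
  assume "thickly_sensitive M d T"
  then obtain \<delta> where "\<delta> > 0" and thick: "\<forall>U. openin (Metric_space.mtopology M d) U \<and> U \<noteq> {}
      \<longrightarrow> thick (S_T d T U \<delta>)"
    unfolding thickly_sensitive_def by blast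
  obtain U where "openin (Metric_space.mtopology M d) U" "U \<noteq> {}"
    and small: "\<forall>n. \<forall>x\<in>U. \<forall>y\<in>U. d ((T ^^ n) x) ((T ^^ n) y) \<le> \<delta>"
    using assms[OF \<open>\<delta> > 0\<close>] by blast
  with thick have "thick (S_T d T U \<delta>)" by blast
  moreover have "S_T d T U \<delta> = {}" using small unfolding S_T_def by (auto simp: not_less)
  ultimately show False unfolding thick_def by simp
qed

lemma continuous_on_if_locally_lipschitz:
  assumes "\<And>x. x \<in> S \<Longrightarrow> \<exists>r>0. \<forall>y\<in>S. dist y x < r \<longrightarrow> dist (f y) (f x) \<le> L * dist y x"
  shows "continuous_on S f"
  unfolding continuous_on_iff
proof (intro ballI allI impI)
  fix x and \<epsilon> :: real
  assume "x \<in> S" "0 < \<epsilon>"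
  obtain r where "0 < r" and lip: "\<forall>y\<in>S. dist y x < r \<longrightarrow> dist (f y) (f x) \<le> L * dist y x"
    using assms[OF \<open>x \<in> S\<close>] by blast
  define \<delta> where "\<delta> = min r (\<epsilon> / (\<bar>L\<bar> + 1))"
  have "dist (f y) (f x) < \<epsilon>" if "y \<in> S" "dist y x < \<delta>" for y
  proof -
    have "dist (f y) (f x) \<le> L * dist y x" using lip that by (simp add: \<delta>_def)
    also have "\<dots> \<le> (\<bar>L\<bar> + 1) * dist y x" by (intro mult_right_mono) simp_all
    also have "\<dots> < (\<bar>L\<bar> + 1) * (\<epsilon> / (\<bar>L\<bar> + 1))"
      using that(2) by (intro mult_strict_left_mono) (simp_all add: \<delta>_def)
    also have "\<dots> = \<epsilon>" by simp
    finally show ?thesis .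
  qed
  moreover have "0 < \<delta>" using \<open>0 < r\<close> \<open>0 < \<epsilon>\<close> by (simp add: \<delta>_def)
  ultimately show "\<exists>\<delta>>0. \<forall>y\<in>S. dist y x < \<delta> \<longrightarrow> dist (f y) (f x) < \<epsilon>" by blast
qed

lemma openin_contains_subinterval:
  fixes lo hi :: real
  assumes "openin (top_of_set S) U" "x \<in> U" "x \<in> {lo..hi}" "lo < hi" "{lo..hi} \<subseteq> S"
  shows "\<exists>a b. a < b \<and> {a..b} \<subseteq> {lo..hi} \<and> {a..b} \<subseteq> U"
proof -
  obtain r where "0 < r" and r: "\<forall>y\<in>S. dist y x < r \<longrightarrow> y \<in> U"
    using assms(1,2) unfolding openin_euclidean_subtopology_iff by blast
  define a where "a = max lo (x - r / 2)"
  define b where "b = min hi (x + r / 2)"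
  have "a < b" using assms(3,4) \<open>0 < r\<close> by (auto simp: a_def b_def)
  moreover have "{a..b} \<subseteq> {lo..hi}" by (auto simp: a_def b_def)
  moreover have "{a..b} \<subseteq> U"
  proof
    fix y assume "y \<in> {a..b}"
    then have "y \<in> S" "dist y x < r"
      using \<open>{a..b} \<subseteq> {lo..hi}\<close> assms(5) \<open>0 < r\<close> by (auto simp: a_def b_def dist_real_def)
    then show "y \<in> U" using r by blast
  qed
  ultimately show ?thesis by blast
qed

section \<open>The tent map\<close>

definition tent :: "real \<Rightarrow> real" where
  "tent u = 1 - \<bar>2 * u - 1\<bar>"

lemma tent_lipschitz: "\<bar>tent u - tent v\<bar> \<le> 2 * \<bar>u - v\<bar>"
proof -
  have "\<bar>tent u - tent v\<bar> = \<bar>\<bar>2 * v - 1\<bar> - \<bar>2 * u - 1\<bar>\<bar>" by (simp add: tent_def)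
  also have "\<dots> \<le> \<bar>(2 * v - 1) - (2 * u - 1)\<bar>" by (rule abs_triangle_ineq3)
  also have "(2 * v - 1) - (2 * u - 1) = 2 * (v - u)" by simp
  finally show ?thesis by (simp only: abs_mult abs_minus_commute)
qed

lemma tent_image_left_half:
  assumes "0 \<le> a" "b \<le> 1/2"
  shows "tent ` {a..b} = {2 * a..2 * b}"
proof -
  have "tent ` {a..b} = (\<lambda>u. 2 * u + 0) ` {a..b}"
    using assms by (intro image_cong) (auto simp: tent_def)
  then show ?thesis by (simp add: image_affinity_atLeastAtMost)
qed

lemma tent_image_reflect: "tent ` {1 - b..1 - a} = tent ` {a..b}"
proof -
  have "{1 - b..1 - a} = (\<lambda>u. 1 - u) ` {a..b}"
    using image_affinity_atLeastAtMost[of "-1" 1 a b] by auto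
  moreover have "tent \<circ> (\<lambda>u. 1 - u) = tent" by (auto simp: tent_def abs_minus_commute)
  ultimately show ?thesis by (metis image_comp)
qed

lemma tent_image_dyadic_left_half:
  assumes "j < 2 ^ m"
  shows "tent ` {real j / 2 ^ Suc m..(real j + 1) / 2 ^ Suc m} = {real j / 2 ^ m..(real j + 1) / 2 ^ m}"
proof -
  have "real j + 1 \<le> 2 ^ m"
    using assms of_nat_le_iff[of "j + 1" "2 ^ m", where 'a = real] by simp
  then have "(real j + 1) / 2 ^ Suc m \<le> 1/2" by (simp add: field_simps)
  then have "tent ` {real j / 2 ^ Suc m..(real j + 1) / 2 ^ Suc m}
      = {2 * (real j / 2 ^ Suc m)..2 * ((real j + 1) / 2 ^ Suc m)}"
    by (intro tent_image_left_half) simp_all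
  also have "\<dots> = {real j / 2 ^ m..(real j + 1) / 2 ^ m}"
    by (rule arg_cong2[where f = atLeastAtMost]) (simp_all add: field_simps)
  finally show ?thesis .
qed

lemma tent_image_dyadic:
  assumes "j < 2 ^ Suc m"
  shows "\<exists>i < 2 ^ m. tent ` {real j / 2 ^ Suc m..(real j + 1) / 2 ^ Suc m}
           = {real i / 2 ^ m..(real i + 1) / 2 ^ m}"
proof (cases "j < 2 ^ m")
  case True
  then show ?thesis by (intro exI[of _ j] conjI tent_image_dyadic_left_half)
next
  case False
  define i where "i = 2 ^ Suc m - 1 - j"
  have "i < 2 ^ m" using False assms unfolding i_def by auto
  have "real i = 2 ^ Suc m - 1 - real j" using assms unfolding i_def by (simp add: of_nat_diff)
  then have "real j / 2 ^ Suc m = 1 - (real i + 1) / 2 ^ Suc m"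
    and "(real j + 1) / 2 ^ Suc m = 1 - real i / 2 ^ Suc m"
    by (simp_all add: field_simps)
  then have "tent ` {real j / 2 ^ Suc m..(real j + 1) / 2 ^ Suc m}
      = tent ` {1 - (real i + 1) / 2 ^ Suc m..1 - real i / 2 ^ Suc m}"
    by (simp only:)
  also have "\<dots> = tent ` {real i / 2 ^ Suc m..(real i + 1) / 2 ^ Suc m}"
    by (rule tent_image_reflect)
  also have "\<dots> = {real i / 2 ^ m..(real i + 1) / 2 ^ m}"
    using tent_image_dyadic_left_half[OF \<open>i < 2 ^ m\<close>] .
  finally show ?thesis using \<open>i < 2 ^ m\<close> by (intro exI[of _ i]) simp
qed

lemma tent_iterate_image_dyadic:
  "j < 2 ^ m \<Longrightarrow> (tent ^^ m) ` {real j / 2 ^ m..(real j + 1) / 2 ^ m} = {0..1}"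
proof (induction m arbitrary: j)
  case 0
  then show ?case by simp
next
  case (Suc m)
  obtain i where "i < 2 ^ m"
    and i: "tent ` {real j / 2 ^ Suc m..(real j + 1) / 2 ^ Suc m} = {real i / 2 ^ m..(real i + 1) / 2 ^ m}"
    using tent_image_dyadic[OF Suc.prems] by blast
  have "(tent ^^ Suc m) ` {real j / 2 ^ Suc m..(real j + 1) / 2 ^ Suc m}
      = (tent ^^ m) ` tent ` {real j / 2 ^ Suc m..(real j + 1) / 2 ^ Suc m}"
    by (simp only: funpow_Suc_right image_comp)
  also have "\<dots> = {0..1}" unfolding i using Suc.IH[OF \<open>i < 2 ^ m\<close>] .
  finally show ?case .
qed

lemma tent_image_unit: "tent ` {0..1} = {0..1}"
proof
  show "tent ` {0..1} \<subseteq> {0..1}" by (auto simp: tent_def)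
  have "tent ` {0..1/2} = {0..1}" by (simp add: tent_image_left_half)
  then show "{0..1} \<subseteq> tent ` {0..1}" using image_mono[of "{0..1/2}" "{0..1}" tent] by auto
qed

lemma tent_iterate_image_unit: "(tent ^^ n) ` {0..1} = {0..1}"
proof (induction n)
  case (Suc n)
  have "(tent ^^ Suc n) ` {0..1} = tent ` (tent ^^ n) ` {0..1}"
    by (simp only: funpow.simps image_comp)
  then show ?case by (simp only: Suc.IH tent_image_unit)
qed simp

lemma tent_iterate_eventually_onto:
  assumes "0 \<le> a" "a < b" "b \<le> 1"
  shows "\<exists>m. \<forall>n\<ge>m. (tent ^^ n) ` {a..b} = {0..1}"
proof -
  obtain m where "(1/2) ^ m < (b - a) / 2"
    using real_arch_pow_inv[of "(b - a) / 2" "1/2"] assms by auto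
  then have wide: "2 < (b - a) * 2 ^ m" by (simp add: power_divide field_simps)
  define j where "j = nat \<lceil>a * 2 ^ m\<rceil>"
  have "real j = of_int \<lceil>a * 2 ^ m\<rceil>" unfolding j_def using assms by simp
  then have j: "a * 2 ^ m \<le> real j" "real j < a * 2 ^ m + 1" by linarith+
  have "real j + 1 < b * 2 ^ m" using j wide by (simp add: algebra_simps)
  also have "\<dots> \<le> 2 ^ m" using assms by simp
  finally have "real j < 2 ^ m" by linarith
  then have "j < 2 ^ m" by simp
  have "a \<le> real j / 2 ^ m" using j(1) by (simp add: pos_le_divide_eq)
  moreover have "(real j + 1) / 2 ^ m \<le> b"
    using \<open>real j + 1 < b * 2 ^ m\<close> by (simp add: pos_divide_le_eq)
  ultimately have sub: "{real j / 2 ^ m..(real j + 1) / 2 ^ m} \<subseteq> {a..b}" by (meson atLeastAtMost_iff order_trans subsetI)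
  have "(tent ^^ n) ` {a..b} = {0..1}" if "m \<le> n" for n
  proof (rule equalityI)
    have "(tent ^^ n) ` {a..b} \<subseteq> (tent ^^ n) ` {0..1}" using assms by (intro image_mono) auto
    then show "(tent ^^ n) ` {a..b} \<subseteq> {0..1}" by (simp only: tent_iterate_image_unit)
    define p where "p = n - m"
    have n: "n = p + m" using \<open>m \<le> n\<close> by (simp add: p_def)
    have "{0..1} = (tent ^^ p) ` (tent ^^ m) ` {real j / 2 ^ m..(real j + 1) / 2 ^ m}"
      by (simp only: tent_iterate_image_dyadic[OF \<open>j < 2 ^ m\<close>] tent_iterate_image_unit)
    also have "\<dots> = (tent ^^ n) ` {real j / 2 ^ m..(real j + 1) / 2 ^ m}"
      by (simp only: n funpow_add image_comp)
    also have "\<dots> \<subseteq> (tent ^^ n) ` {a..b}" using sub by (rule image_mono)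
    finally show "{0..1} \<subseteq> (tent ^^ n) ` {a..b}" .
  qed
  then show ?thesis by blast
qed

lemma tent_coordinates_eventually_separate:
  fixes T :: "real \<Rightarrow> real"
  assumes "a < b" "{a..b} \<subseteq> U" "0 < m" "0 \<le> m * a + s" "m * b + s \<le> 1" "0 < \<alpha>"
    and iter: "\<And>y n. y \<in> {a..b} \<Longrightarrow> (T ^^ (c + n)) y = \<alpha> * (1 + (tent ^^ n) (m * y + s))"
  shows "\<exists>N. \<forall>n\<ge>N. n \<in> S_T dist T U (\<alpha> / 2)"
proof -
  have "m * a + s < m * b + s" using assms(1,3) by simp
  then obtain N where onto: "\<forall>n\<ge>N. (tent ^^ n) ` {m * a + s..m * b + s} = {0..1}"
    using tent_iterate_eventually_onto assms(4,5) by blast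
  have coords: "(\<lambda>y. m * y + s) ` {a..b} = {m * a + s..m * b + s}"
    using assms(1,3) by (simp add: image_affinity_atLeastAtMost)
  have "n \<in> S_T dist T U (\<alpha> / 2)" if "c + N \<le> n" for n
  proof -
    define p where "p = n - c"
    have n: "n = c + p" and "N \<le> p" using that by (simp_all add: p_def)
    have "(tent ^^ p) ` (\<lambda>y. m * y + s) ` {a..b} = {0..1}" using onto \<open>N \<le> p\<close> coords by simp
    then have "0 \<in> (\<lambda>y. (tent ^^ p) (m * y + s)) ` {a..b}" "1 \<in> (\<lambda>y. (tent ^^ p) (m * y + s)) ` {a..b}"
      by (simp_all add: image_image)
    then obtain y0 y1 where "y0 \<in> {a..b}" "(tent ^^ p) (m * y0 + s) = 0"
      and "y1 \<in> {a..b}" "(tent ^^ p) (m * y1 + s) = 1"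
      by (metis (no_types, lifting) imageE)
    then have "(T ^^ n) y0 = \<alpha>" "(T ^^ n) y1 = 2 * \<alpha>" by (simp_all add: n iter)
    then have "\<alpha> / 2 < dist ((T ^^ n) y0) ((T ^^ n) y1)" using assms(6) by (simp add: dist_real_def)
    then show ?thesis
      using \<open>y0 \<in> {a..b}\<close> \<open>y1 \<in> {a..b}\<close> assms(2) unfolding S_T_def by blast
  qed
  then show ?thesis by blast
qed

section \<open>The example system\<close>

definition lam :: "nat \<Rightarrow> real" where
  "lam k = 1 / 4 ^ k"

definition block_A :: "nat \<Rightarrow> real set" where
  "block_A k = {lam k..2 * lam k}"

definition block_B :: "nat \<Rightarrow> real set" where
  "block_B k = {3 * lam k..7/2 * lam k}"

definition ex_space :: "real set" where
  "ex_space = {0} \<union> (\<Union>k\<in>{1..}. block_A k \<union> block_B k)"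

text \<open>For x \<in> block_A k \<union> block_B k, scale x = k.\<close>
definition scale :: "real \<Rightarrow> nat" where
  "scale x = (LEAST k. lam k \<le> x)"

definition ex_map :: "real \<Rightarrow> real" where
  "ex_map x =
     (if x \<le> 0 then 0
      else if x \<le> 2 * lam (scale x) then lam (scale x) * (1 + tent (4 ^ scale x * x - 1))
      else if scale x = 1 then 2 * x - 5/4
      else 4 * x)"

lemma lam_pos: "0 < lam k"
  by (simp add: lam_def)

lemma lam_Suc: "lam (Suc k) = lam k / 4"
  by (simp add: lam_def)

lemma four_pow_mult_lam: "4 ^ k * lam k = 1"
  by (simp add: lam_def power_divide)

lemma lam_less: "j < k \<Longrightarrow> 4 * lam k \<le> lam j"
  using power_increasing[of "Suc j" k "4 :: real"] by (simp add: lam_def field_simps)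

lemma scale_eq:
  assumes "lam k \<le> x" "x < 4 * lam k"
  shows "scale x = k"
  unfolding scale_def
proof (rule Least_equality)
  show "lam k \<le> x" by fact
  show "k \<le> j" if "lam j \<le> x" for j
    using that assms lam_less[of j k] by (cases "j < k") auto
qed

lemma mem_block_A_iff: "x \<in> block_A k \<longleftrightarrow> 4 ^ k * x - 1 \<in> {0..1}"
  by (simp add: block_A_def lam_def field_simps)

lemma mem_block_B_iff: "x \<in> block_B k \<longleftrightarrow> 2 * 4 ^ k * x - 6 \<in> {0..1}"
  by (simp add: block_B_def lam_def field_simps)

lemma ex_map_zero: "ex_map 0 = 0"
  by (simp add: ex_map_def)

lemma ex_map_block_A:
  assumes "x \<in> block_A k"
  shows "ex_map x = lam k * (1 + tent (4 ^ k * x - 1))"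
proof -
  have "lam k \<le> x" "x \<le> 2 * lam k" using assms by (simp_all add: block_A_def)
  moreover from this have "scale x = k" using lam_pos[of k] by (intro scale_eq) simp_all
  ultimately show ?thesis using lam_pos[of k] by (simp add: ex_map_def)
qed

lemma ex_map_block_B_1:
  assumes "x \<in> block_B 1"
  shows "ex_map x = 2 * x - 5/4"
proof -
  have "3 * lam 1 \<le> x" "x \<le> 7/2 * lam 1" using assms by (simp_all add: block_B_def)
  moreover from this have "scale x = 1" using lam_pos[of 1] by (intro scale_eq) simp_all
  ultimately show ?thesis using lam_pos[of 1] by (simp add: ex_map_def)
qed

lemma ex_map_block_B:
  assumes "x \<in> block_B (Suc k)" "1 \<le> k"
  shows "ex_map x = 4 * x"
proof -
  have "3 * lam (Suc k) \<le> x" "x \<le> 7/2 * lam (Suc k)" using assms by (simp_all add: block_B_def)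
  moreover from this have "scale x = Suc k" using lam_pos[of "Suc k"] by (intro scale_eq) simp_all
  ultimately show ?thesis using lam_pos[of "Suc k"] assms(2) by (simp add: ex_map_def)
qed

lemma ex_map_iterate_block_A:
  assumes "x \<in> block_A k"
  shows "(ex_map ^^ n) x = lam k * (1 + (tent ^^ n) (4 ^ k * x - 1))"
proof (induction n)
  case 0
  then show ?case using four_pow_mult_lam[of k] by (simp add: algebra_simps)
next
  case (Suc n)
  define v where "v = (tent ^^ n) (4 ^ k * x - 1)"
  have "v \<in> {0..1}"
    using assms tent_iterate_image_unit[of n] unfolding v_def mem_block_A_iff by blast
  moreover have "4 ^ k * (lam k * (1 + v)) - 1 = v"
    using four_pow_mult_lam[of k] by (simp add: algebra_simps)
  ultimately have "lam k * (1 + v) \<in> block_A k" by (simp only: mem_block_A_iff)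
  then have "ex_map (lam k * (1 + v)) = lam k * (1 + tent v)"
    using ex_map_block_A \<open>4 ^ k * (lam k * (1 + v)) - 1 = v\<close> by metis
  then show ?case using Suc.IH by (simp add: v_def)
qed

lemma ex_map_iterate_mem_block_A:
  assumes "x \<in> block_A k"
  shows "(ex_map ^^ n) x \<in> block_A k"
proof -
  have "(tent ^^ n) (4 ^ k * x - 1) \<in> {0..1}"
    using assms tent_iterate_image_unit[of n] unfolding mem_block_A_iff by blast
  then show ?thesis
    using ex_map_iterate_block_A[OF assms, of n] lam_pos[of k] by (auto simp: block_A_def)
qed

lemma ex_map_iterate_block_B_enters_A_1:
  assumes "x \<in> block_B k" "1 \<le> k"
  shows "(ex_map ^^ k) x = lam 1 * (1 + (2 * 4 ^ k * x - 6))"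
  using assms(2,1)
proof (induction k arbitrary: x rule: nat_induct_at_least)
  case base
  then show ?case by (simp add: ex_map_block_B_1 lam_def algebra_simps)
next
  case (Suc k)
  have "4 * x \<in> block_B k" using Suc.prems by (simp add: block_B_def lam_Suc)
  moreover have "ex_map x = 4 * x" using Suc.prems Suc.hyps by (rule ex_map_block_B)
  ultimately have "(ex_map ^^ Suc k) x = (ex_map ^^ k) (4 * x)"
    by (simp only: funpow_Suc_right comp_apply)
  then show ?case using Suc.IH[OF \<open>4 * x \<in> block_B k\<close>] by (simp add: algebra_simps)
qed

lemma ex_map_block_B_1_enters_A_1: "x \<in> block_B 1 \<Longrightarrow> ex_map x \<in> block_A 1"
  using ex_map_iterate_block_B_enters_A_1[of x 1] by (simp add: mem_block_A_iff mem_block_B_iff lam_def)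

lemma ex_map_iterate_block_B:
  assumes "x \<in> block_B k" "1 \<le> k"
  shows "(ex_map ^^ (k + n)) x = lam 1 * (1 + (tent ^^ n) (2 * 4 ^ k * x - 6))"
proof -
  let ?y = "(ex_map ^^ k) x"
  have "4 * ?y - 1 = 2 * 4 ^ k * x - 6"
    using ex_map_iterate_block_B_enters_A_1[OF assms] by (simp add: lam_def)
  moreover have "2 * 4 ^ k * x - 6 \<in> {0..1}" using assms(1) by (simp only: mem_block_B_iff)
  ultimately have "?y \<in> block_A 1" by (simp only: mem_block_A_iff power_one_right)
  have "(ex_map ^^ (k + n)) x = (ex_map ^^ n) ?y" by (simp only: add.commute[of k] funpow_add comp_apply)
  also have "\<dots> = lam 1 * (1 + (tent ^^ n) (4 * ?y - 1))"
    using ex_map_iterate_block_A[OF \<open>?y \<in> block_A 1\<close>] by simp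
  finally show ?thesis using \<open>4 * ?y - 1 = 2 * 4 ^ k * x - 6\<close> by simp
qed

section \<open>Topology of the example\<close>

lemma mem_ex_space: "y \<in> ex_space \<longleftrightarrow> y = 0 \<or> (\<exists>k\<ge>1. y \<in> block_A k \<or> y \<in> block_B k)"
  by (auto simp: ex_space_def)

lemma zero_mem_ex_space: "0 \<in> ex_space"
  by (simp add: ex_space_def)

lemma block_A_subset: "1 \<le> k \<Longrightarrow> block_A k \<subseteq> ex_space"
  by (auto simp: ex_space_def)

lemma block_B_subset: "1 \<le> k \<Longrightarrow> block_B k \<subseteq> ex_space"
  by (auto simp: ex_space_def)

lemma ex_space_cases:
  assumes "y \<in> ex_space"
  obtains "y = 0" | k where "1 \<le> k" "y \<in> block_A k" | "y \<in> block_B 1"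
    | k where "1 \<le> k" "y \<in> block_B (Suc k)"
proof -
  consider "y = 0" | k where "1 \<le> k" "y \<in> block_A k" | k where "1 \<le> k" "y \<in> block_B k"
    using assms unfolding mem_ex_space by blast
  then show ?thesis
  proof cases
    case 1
    then show ?thesis by (rule that(1))
  next
    case (2 k)
    then show ?thesis by (rule that(2))
  next
    case (3 k)
    show ?thesis
    proof (cases "k = 1")
      case True
      then show ?thesis using 3(2) that(3) by simp
    next
      case False
      then obtain j where "k = Suc j" "1 \<le> j" using 3(1) by (cases k) simp_all
      then show ?thesis using 3(2) that(4) by simp
    qed
  qed
qed

lemma block_bounds:
  assumes "y \<in> block_A k \<or> y \<in> block_B k"
  shows "lam k \<le> y" "y \<le> 7/2 * lam k"
  using assms lam_pos[of k] by (auto simp: block_A_def block_B_def)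

lemma ex_space_near_scale:
  assumes "y \<in> ex_space" "lam k \<le> x" "x \<le> 7/2 * lam k" "\<bar>y - x\<bar> < lam k / 8"
  shows "y \<in> block_A k \<or> y \<in> block_B k"
proof -
  have "y \<noteq> 0" using assms(2,4) lam_pos[of k] by auto
  then obtain j where "y \<in> block_A j \<or> y \<in> block_B j"
    using assms(1) unfolding mem_ex_space by blast
  moreover have "j = k"
  proof (rule linorder_cases)
    assume "j < k"
    then show ?thesis
      using lam_less[of j k] block_bounds[OF \<open>y \<in> block_A j \<or> y \<in> block_B j\<close>] assms(3,4) lam_pos[of k]
      by auto
  next
    assume "k < j"
    then show ?thesis
      using lam_less[of k j] block_bounds[OF \<open>y \<in> block_A j \<or> y \<in> block_B j\<close>] assms(2,4) lam_pos[of k]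
      by auto
  qed
  ultimately show ?thesis by blast
qed

lemma block_isolated:
  assumes "P \<in> {block_A k, block_B k}" "x \<in> P" "y \<in> ex_space" "\<bar>y - x\<bar> < lam k / 8"
  shows "y \<in> P"
proof -
  have "x \<in> block_A k \<or> x \<in> block_B k" using assms(1,2) by blast
  then have "y \<in> block_A k \<or> y \<in> block_B k"
    using ex_space_near_scale[OF assms(3) block_bounds assms(4)] by blast
  then show ?thesis
    using assms(1,2,4) lam_pos[of k] by (auto simp: block_A_def block_B_def)
qed

lemma openin_block:
  assumes "1 \<le> k" "P \<in> {block_A k, block_B k}"
  shows "openin (top_of_set ex_space) P"
  unfolding openin_euclidean_subtopology_iff
proof
  show "P \<subseteq> ex_space" using assms by (auto simp: ex_space_def)
  show "\<forall>x\<in>P. \<exists>e>0. \<forall>y\<in>ex_space. dist y x < e \<longrightarrow> y \<in> P"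
    using assms(2) lam_pos[of k] block_isolated
    by (intro ballI exI[of _ "lam k / 8"]) (auto simp: dist_real_def)
qed

text \<open>All blocks of index above N lie in [0, lam N]; this exhibits ex_space as closed.\<close>
lemma ex_space_eq_INT:
  "ex_space = (\<Inter>N. {0..lam N} \<union> (\<Union>k\<in>{1..N}. block_A k \<union> block_B k))"
proof (rule equalityI)
  show "ex_space \<subseteq> (\<Inter>N. {0..lam N} \<union> (\<Union>k\<in>{1..N}. block_A k \<union> block_B k))"
  proof (intro subsetI INT_I)
    fix y N assume "y \<in> ex_space"
    then consider "y = 0" | k where "1 \<le> k" "y \<in> block_A k \<or> y \<in> block_B k"
      unfolding mem_ex_space by blast
    then show "y \<in> {0..lam N} \<union> (\<Union>k\<in>{1..N}. block_A k \<union> block_B k)"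
    proof cases
      case 1
      then show ?thesis using lam_pos[of N] by simp
    next
      case (2 k)
      show ?thesis
      proof (cases "k \<le> N")
        case True
        then have "k \<in> {1..N}" using 2(1) by simp
        then show ?thesis using 2(2) by blast
      next
        case False
        then have "4 * lam k \<le> lam N" by (intro lam_less) simp
        then have "y \<in> {0..lam N}" using block_bounds[OF 2(2)] lam_pos[of k] by simp
        then show ?thesis by (rule UnI1)
      qed
    qed
  qed
  show "(\<Inter>N. {0..lam N} \<union> (\<Union>k\<in>{1..N}. block_A k \<union> block_B k)) \<subseteq> ex_space"
  proof
    fix y assume y: "y \<in> (\<Inter>N. {0..lam N} \<union> (\<Union>k\<in>{1..N}. block_A k \<union> block_B k))"
    show "y \<in> ex_space"
    proof (cases "0 < y")
      case True
      obtain N where "1 / y < 4 ^ N" using real_arch_pow[of 4 "1 / y"] by auto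
      then have "y \<notin> {0..lam N}" using True by (simp add: lam_def field_simps)
      moreover have "y \<in> {0..lam N} \<union> (\<Union>k\<in>{1..N}. block_A k \<union> block_B k)" using y by blast
      ultimately obtain k where "k \<in> {1..N}" "y \<in> block_A k \<union> block_B k" by blast
      then show ?thesis unfolding mem_ex_space by auto
    next
      case False
      have "y \<in> {0..lam 0} \<union> (\<Union>k\<in>{1..0}. block_A k \<union> block_B k)" using y by blast
      then show ?thesis using False by (simp add: ex_space_def)
    qed
  qed
qed

lemma compact_ex_space: "compact ex_space"
proof (rule compact_eq_bounded_closed[THEN iffD2, OF conjI])
  have "ex_space \<subseteq> {0..lam 0} \<union> (\<Union>k\<in>{1..0}. block_A k \<union> block_B k)"
    by (subst ex_space_eq_INT) blast
  then have "ex_space \<subseteq> {0..1}" by (simp add: lam_def)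
  then show "bounded ex_space" by (rule bounded_subset[OF bounded_closed_interval])
  show "closed ex_space"
    unfolding ex_space_eq_INT block_A_def block_B_def
    by (intro closed_INT closed_Un closed_UN ballI finite_atLeastAtMost closed_atLeastAtMost)
qed

lemma ex_map_image: "ex_map ` ex_space = ex_space"
proof (rule equalityI)
  show "ex_map ` ex_space \<subseteq> ex_space"
  proof (rule image_subsetI)
    fix y assume "y \<in> ex_space"
    then show "ex_map y \<in> ex_space"
    proof (cases rule: ex_space_cases)
      case 1
      then show ?thesis by (simp add: ex_map_zero zero_mem_ex_space)
    next
      case (2 k)
      then show ?thesis using ex_map_iterate_mem_block_A[of y k 1] block_A_subset by auto
    next
      case 3
      then show ?thesis using ex_map_block_B_1_enters_A_1 block_A_subset[of 1] by auto
    next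
      case (4 k)
      then have "ex_map y \<in> block_B k" using ex_map_block_B[OF 4(2,1)] by (simp add: block_B_def lam_Suc)
      then show ?thesis using block_B_subset[OF 4(1)] by auto
    qed
  qed
  show "ex_space \<subseteq> ex_map ` ex_space"
  proof
    fix z assume "z \<in> ex_space"
    then consider "z = 0" | k where "1 \<le> k" "z \<in> block_A k" | k where "1 \<le> k" "z \<in> block_B k"
      unfolding mem_ex_space by blast
    then show "z \<in> ex_map ` ex_space"
    proof cases
      case 1
      then show ?thesis using ex_map_zero zero_mem_ex_space by (metis image_eqI)
    next
      case (2 k)
      \<comment> \<open>the left half of the tent supplies a preimage inside the same block\<close>
      define u where "u = 4 ^ k * z - 1"
      have "u \<in> {0..1}" using 2(2) by (simp add: u_def mem_block_A_iff)
      define y where "y = lam k * (1 + u / 2)"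
      have chart: "4 ^ k * y - 1 = u / 2"
        using four_pow_mult_lam[of k] by (simp add: y_def algebra_simps)
      then have "y \<in> block_A k" using \<open>u \<in> {0..1}\<close> by (simp add: mem_block_A_iff)
      have "tent (u / 2) = u" using \<open>u \<in> {0..1}\<close> by (simp add: tent_def)
      then have "ex_map y = lam k * (1 + u)" by (simp add: ex_map_block_A[OF \<open>y \<in> block_A k\<close>] chart)
      also have "\<dots> = z" using four_pow_mult_lam[of k] by (simp add: u_def algebra_simps)
      finally show ?thesis using \<open>y \<in> block_A k\<close> block_A_subset[OF 2(1)] by (metis image_eqI subsetD)
    next
      case (3 k)
      then have "z / 4 \<in> block_B (Suc k)" by (simp add: block_B_def lam_Suc)
      moreover have "ex_map (z / 4) = z" using ex_map_block_B[OF calculation 3(1)] by simp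
      moreover have "block_B (Suc k) \<subseteq> ex_space" by (rule block_B_subset) simp
      ultimately show ?thesis by (metis image_eqI subsetD)
    qed
  qed
qed

lemma ex_map_lipschitz_on_block:
  assumes "1 \<le> k" "P \<in> {block_A k, block_B k}" "x \<in> P" "y \<in> P"
  shows "\<bar>ex_map y - ex_map x\<bar> \<le> 4 * \<bar>y - x\<bar>"
proof (cases "P = block_A k")
  case True
  then have "ex_map y - ex_map x = lam k * (tent (4 ^ k * y - 1) - tent (4 ^ k * x - 1))"
    using assms(3,4) by (simp add: ex_map_block_A algebra_simps)
  then have "\<bar>ex_map y - ex_map x\<bar> = lam k * \<bar>tent (4 ^ k * y - 1) - tent (4 ^ k * x - 1)\<bar>"
    using lam_pos[of k] by (simp add: abs_mult)
  also have "\<dots> \<le> lam k * (2 * \<bar>(4 ^ k * y - 1) - (4 ^ k * x - 1)\<bar>)"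
    using lam_pos[of k] by (intro mult_left_mono tent_lipschitz) simp
  also have "(4 ^ k * y - 1) - (4 ^ k * x - 1) = 4 ^ k * (y - x)" by (simp add: algebra_simps)
  also have "lam k * (2 * \<bar>4 ^ k * (y - x)\<bar>) = 2 * (4 ^ k * lam k) * \<bar>y - x\<bar>"
    by (simp add: abs_mult)
  finally show ?thesis by (simp add: four_pow_mult_lam)
next
  case False
  then have B: "x \<in> block_B k" "y \<in> block_B k" using assms(2-4) by auto
  show ?thesis
  proof (cases "k = 1")
    case True
    then have "ex_map y - ex_map x = 2 * (y - x)" using B by (simp add: ex_map_block_B_1)
    then have "\<bar>ex_map y - ex_map x\<bar> = \<bar>2\<bar> * \<bar>y - x\<bar>" by (simp only: abs_mult)
    then show ?thesis by simp
  next
    case False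
    then obtain j where "k = Suc j" "1 \<le> j" using assms(1) by (cases k) simp_all
    then have "ex_map y - ex_map x = 4 * (y - x)" using B by (simp add: ex_map_block_B)
    then have "\<bar>ex_map y - ex_map x\<bar> = \<bar>4\<bar> * \<bar>y - x\<bar>" by (simp only: abs_mult)
    then show ?thesis by simp
  qed
qed

lemma ex_map_le: "y \<in> ex_space \<Longrightarrow> \<bar>ex_map y\<bar> \<le> 4 * \<bar>y\<bar>"
proof -
  assume "y \<in> ex_space"
  then show ?thesis
  proof (cases rule: ex_space_cases)
    case 1
    then show ?thesis by (simp add: ex_map_zero)
  next
    case (2 k)
    then have "ex_map y \<in> block_A k" using ex_map_iterate_mem_block_A[of y k 1] by simp
    then show ?thesis using 2(2) lam_pos[of k] by (simp add: block_A_def)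
  next
    case 3
    then have "ex_map y \<in> block_A 1" by (rule ex_map_block_B_1_enters_A_1)
    then show ?thesis using 3 by (simp add: block_A_def block_B_def lam_def)
  next
    case (4 k)
    then show ?thesis using ex_map_block_B[OF 4(2,1)] by simp
  qed
qed

lemma ex_map_locally_lipschitz:
  assumes "x \<in> ex_space"
  shows "\<exists>r>0. \<forall>y\<in>ex_space. dist y x < r \<longrightarrow> dist (ex_map y) (ex_map x) \<le> 4 * dist y x"
proof -
  consider "x = 0" | k P where "1 \<le> k" "P \<in> {block_A k, block_B k}" "x \<in> P"
    using assms unfolding mem_ex_space by blast
  then show ?thesis
  proof cases
    case 1
    then show ?thesis using ex_map_le by (intro exI[of _ 1]) (simp add: dist_real_def ex_map_zero)
  next
    case (2 k P)
    have "dist (ex_map y) (ex_map x) \<le> 4 * dist y x"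
      if "y \<in> ex_space" "dist y x < lam k / 8" for y
    proof -
      have "y \<in> P" using block_isolated[OF 2(2,3) that(1)] that(2) by (simp add: dist_real_def)
      then show ?thesis using ex_map_lipschitz_on_block[OF 2 \<open>y \<in> P\<close>] by (simp add: dist_real_def)
    qed
    then show ?thesis using lam_pos[of k] by (intro exI[of _ "lam k / 8"]) simp
  qed
qed

lemma continuous_on_ex_map: "continuous_on ex_space ex_map"
  using ex_map_locally_lipschitz by (rule continuous_on_if_locally_lipschitz)

section \<open>Sensitivity of the example\<close>

lemma block_A_interval_sensitive:
  assumes "a < b" "{a..b} \<subseteq> block_A k" "{a..b} \<subseteq> U"
  shows "\<exists>N. \<forall>n\<ge>N. n \<in> S_T dist ex_map U (lam k / 2)"
proof (rule tent_coordinates_eventually_separate[where c = 0 and m = "4 ^ k" and s = "-1"])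
  have "a \<in> block_A k" "b \<in> block_A k" using assms(1,2) by auto
  then show "0 \<le> 4 ^ k * a + - 1" "4 ^ k * b + - 1 \<le> 1" by (simp_all add: mem_block_A_iff)
  show "(ex_map ^^ (0 + n)) y = lam k * (1 + (tent ^^ n) (4 ^ k * y + - 1))" if "y \<in> {a..b}" for y n
    using ex_map_iterate_block_A that assms(2) by auto
qed (use assms lam_pos in auto)

lemma block_B_interval_sensitive:
  assumes "1 \<le> k" "a < b" "{a..b} \<subseteq> block_B k" "{a..b} \<subseteq> U"
  shows "\<exists>N. \<forall>n\<ge>N. n \<in> S_T dist ex_map U (lam 1 / 2)"
proof (rule tent_coordinates_eventually_separate[where c = k and m = "2 * 4 ^ k" and s = "-6"])
  have "a \<in> block_B k" "b \<in> block_B k" using assms(2,3) by auto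
  then show "0 \<le> 2 * 4 ^ k * a + - 6" "2 * 4 ^ k * b + - 6 \<le> 1" by (simp_all add: mem_block_B_iff)
  show "(ex_map ^^ (k + n)) y = lam 1 * (1 + (tent ^^ n) (2 * 4 ^ k * y + - 6))" if "y \<in> {a..b}" for y n
    using ex_map_iterate_block_B assms(1,3) that by auto
qed (use assms lam_pos in auto)

lemma openin_zero_contains_block_B:
  assumes "openin (top_of_set ex_space) U" "0 \<in> U"
  shows "\<exists>k\<ge>1. block_B k \<subseteq> U"
proof -
  obtain r where "0 < r" and r: "\<forall>y\<in>ex_space. dist y 0 < r \<longrightarrow> y \<in> U"
    using assms unfolding openin_euclidean_subtopology_iff by blast
  obtain N where "1 / r < 4 ^ N" using real_arch_pow[of 4 "1 / r"] by auto
  then have "lam N < r" using \<open>0 < r\<close> by (simp add: lam_def field_simps)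
  have "block_B (Suc N) \<subseteq> U"
  proof
    fix y assume "y \<in> block_B (Suc N)"
    moreover have "7/2 * lam (Suc N) < lam N" using lam_pos[of N] by (simp add: lam_Suc)
    ultimately have "dist y 0 < r" using \<open>lam N < r\<close> lam_pos[of "Suc N"]
      by (simp add: block_B_def dist_real_def)
    moreover have "y \<in> ex_space" using \<open>y \<in> block_B (Suc N)\<close> block_B_subset[of "Suc N"] by auto
    ultimately show "y \<in> U" using r by blast
  qed
  then show ?thesis by (intro exI[of _ "Suc N"]) simp
qed

lemma ex_map_eventually_sensitive:
  assumes "x \<in> ex_space"
  shows "\<exists>\<epsilon>>0. \<forall>U. openin (top_of_set ex_space) U \<and> x \<in> U \<longrightarrow> (\<exists>N. \<forall>n\<ge>N. n \<in> S_T dist ex_map U \<epsilon>)"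
proof -
  consider "x = 0" | k where "1 \<le> k" "x \<in> block_A k" | k where "1 \<le> k" "x \<in> block_B k"
    using assms unfolding mem_ex_space by blast
  then show ?thesis
  proof cases
    case 1
    have "\<exists>N. \<forall>n\<ge>N. n \<in> S_T dist ex_map U (lam 1 / 2)"
      if U: "openin (top_of_set ex_space) U" "x \<in> U" for U
    proof -
      have "0 \<in> U" using U(2) 1 by simp
      then obtain k where "1 \<le> k" "block_B k \<subseteq> U" using openin_zero_contains_block_B[OF U(1)] by blast
      moreover have "3 * lam k < 7/2 * lam k" using lam_pos[of k] by simp
      ultimately show ?thesis
        using block_B_interval_sensitive[of k "3 * lam k" "7/2 * lam k" U] by (simp add: block_B_def)
    qed
    then show ?thesis using lam_pos[of 1] by (intro exI[of _ "lam 1 / 2"]) auto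
  next
    case (2 k)
    have "\<exists>N. \<forall>n\<ge>N. n \<in> S_T dist ex_map U (lam k / 2)"
      if U: "openin (top_of_set ex_space) U" "x \<in> U" for U
    proof -
      have "lam k < 2 * lam k" using lam_pos[of k] by simp
      then obtain a b where "a < b" "{a..b} \<subseteq> block_A k" "{a..b} \<subseteq> U"
        using openin_contains_subinterval[OF U 2(2)[unfolded block_A_def] _
            block_A_subset[OF 2(1), unfolded block_A_def]]
        unfolding block_A_def by blast
      then show ?thesis by (rule block_A_interval_sensitive)
    qed
    then show ?thesis using lam_pos[of k] by (intro exI[of _ "lam k / 2"]) auto
  next
    case (3 k)
    have "\<exists>N. \<forall>n\<ge>N. n \<in> S_T dist ex_map U (lam 1 / 2)"
      if U: "openin (top_of_set ex_space) U" "x \<in> U" for U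
    proof -
      have "3 * lam k < 7/2 * lam k" using lam_pos[of k] by simp
      then obtain a b where "a < b" "{a..b} \<subseteq> block_B k" "{a..b} \<subseteq> U"
        using openin_contains_subinterval[OF U 3(2)[unfolded block_B_def] _
            block_B_subset[OF 3(1), unfolded block_B_def]]
        unfolding block_B_def by blast
      then show ?thesis by (rule block_B_interval_sensitive[OF 3(1)])
    qed
    then show ?thesis using lam_pos[of 1] by (intro exI[of _ "lam 1 / 2"]) auto
  qed
qed

lemma ex_map_small_invariant_opens:
  assumes "0 < \<delta>"
  shows "\<exists>U. openin (top_of_set ex_space) U \<and> U \<noteq> {} \<and>
           (\<forall>n. \<forall>x\<in>U. \<forall>y\<in>U. dist ((ex_map ^^ n) x) ((ex_map ^^ n) y) \<le> \<delta>)"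
proof -
  obtain N where "1 / \<delta> < 4 ^ N" using real_arch_pow[of 4 "1 / \<delta>"] by auto
  then have "lam N < \<delta>" using assms by (simp add: lam_def field_simps)
  define k where "k = Suc N"
  have "lam k \<le> \<delta>" using \<open>lam N < \<delta>\<close> lam_pos[of N] by (simp add: k_def lam_Suc)
  have "openin (top_of_set ex_space) (block_A k)" by (rule openin_block[of k]) (simp_all add: k_def)
  moreover have "block_A k \<noteq> {}" using lam_pos[of k] by (simp add: block_A_def)
  moreover have "dist ((ex_map ^^ n) x) ((ex_map ^^ n) y) \<le> \<delta>"
    if "x \<in> block_A k" "y \<in> block_A k" for n x y
  proof -
    have "(ex_map ^^ n) x \<in> block_A k" "(ex_map ^^ n) y \<in> block_A k"
      using that by (simp_all add: ex_map_iterate_mem_block_A)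
    then show ?thesis using \<open>lam k \<le> \<delta>\<close> by (auto simp: block_A_def dist_real_def)
  qed
  ultimately show ?thesis by blast
qed

theorem mainTheorem5:
  shows "\<exists>(M :: real set) (d :: real \<Rightarrow> real \<Rightarrow> real) (T :: real \<Rightarrow> real).
           tds M d T \<and> \<not> thickly_sensitive M d T \<and> Eq_syn M d T = {}"
proof (intro exI conjI)
  show "tds ex_space dist ex_map"
    unfolding tds_def mtopology_eq_top_of_set
    using Met_TC.subspace compact_ex_space continuous_on_ex_map ex_map_image zero_mem_ex_space
    by (auto simp: compact_space_subtopology)
  show "\<not> thickly_sensitive ex_space dist ex_map"
    by (rule not_thickly_sensitive_if_small_invariant_opens)
      (simp add: mtopology_eq_top_of_set ex_map_small_invariant_opens)
  show "Eq_syn ex_space dist ex_map = {}"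
    by (rule Eq_syn_eq_empty_if_eventually_sensitive)
      (simp add: mtopology_eq_top_of_set ex_map_eventually_sensitive)
qed

end
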